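(* For every $m\in\mathbb N$ there exists $L_4(m)\in\mathbb N$ with the following property: whenever $\varepsilon_1,\dots,\varepsilon_m\in\{\pm1\}$ and $1\le i_1\le\dots\le i_m$ are integers such that $i_j-i_{j-1}>L_4(m)$ for some $j\in\{2,\dots,m\}$, then $$\varepsilon_1a_{i_1}+\dots+\varepsilon_ma_{i_m}=0\quad\text{implies}\quad\varepsilon_1a_{i_1}+\dots+\varepsilon_{j-1}a_{i_{j-1}}=\varepsilon_ja_{i_j}+\dots+\varepsilon_ma_{i_m}=0.$$ Moreover, $L_4(m)$ can be chosen to be increasing in $m$.
   Context: Standing setting: $d\in\mathbb N$; $\lambda_1,\dots,\lambda_d\in\mathbb C$ are the roots of an irreducible polynomial of degree $d$ with integer coefficients; $c_1,\dots,c_d\in\mathbb C$; the dominant root condition holds: $\lambda_1$ is real, $\lambda_1>1$, $\lambda_1>\max\{|\lambda_2|,\dots,|\lambda_d|\}$, $c_1\ne0$; $a_n=c_1\lambda_1^n+\dots+c_d\lambda_d^n$ is a positive integer for every $n\in\mathbb N$. *)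

theory Defs
  imports "HOL-Analysis.Analysis" "HOL-Computational_Algebra.Polynomial"
begin

definition lrs :: "nat \<Rightarrow> (nat \<Rightarrow> complex) \<Rightarrow> (nat \<Rightarrow> complex) \<Rightarrow> nat \<Rightarrow> complex" where
  "lrs d c lam n = (\<Sum>k=1..d. c k * lam k ^ n)"

definition standing_setting :: "nat \<Rightarrow> (nat \<Rightarrow> complex) \<Rightarrow> (nat \<Rightarrow> complex) \<Rightarrow> bool" where
  "standing_setting d c lam \<longleftrightarrow>
     (\<exists>p :: int poly. degree p = d \<and> irreducible p \<and>
        inj_on lam {1..d} \<and>
        {z. poly (map_poly of_int p) z = 0} = lam ` {1..d}) \<and>
     1 \<le> d \<and>
     lam 1 \<in> \<real> \<and> Re (lam 1) > 1 \<and>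
     (\<forall>k\<in>{2..d}. norm (lam k) < Re (lam 1)) \<and>
     c 1 \<noteq> 0 \<and>
     (\<forall>n\<ge>1. \<exists>z::int. z > 0 \<and> lrs d c lam n = of_int z)"

end

(* Write a_n = sum_l c_l lambda_l^n with dominant root r = lambda_1. For fixed integer
   coefficients e_0, ..., e_D the shifted combination sum_g e_g a_(n+g) equals
   sum_l c_l P(lambda_l) lambda_l^n with P = sum_g e_g x^g. Since the lambda_l are the roots of one
   irreducible integer polynomial, either P(lambda_1) = 0 and the combination vanishes identically,
   or it has size r^n for large n; being an integer, it is then 0 or at least delta r^n for all n >= 1.
   Only finitely many coefficient patterns have bounded length and size, so induction on the number
   m of terms gives delta_m > 0 such that every signed sum of m terms a_(i_k) with all i_k >= n is 0
   or has modulus at least delta_m r^n: if the indices have no gap longer than G, they form one of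
   finitely many patterns; otherwise the terms below the gap add up to at most m C r^(v - G), too
   little to cancel the terms above it. The same comparison, with m C <= delta_m r^L / 2, shows that a
   vanishing sum with a gap longer than L vanishes on both sides of the gap. *)

theory Submission
  imports Defs "HOL-Computational_Algebra.Polynomial_Factorial"
begin

section \<open>Common roots of irreducible integer polynomials\<close>

lemma map_poly_of_int_add:
  "map_poly (of_int :: int \<Rightarrow> 'a::comm_ring_1) (p + q) = map_poly of_int p + map_poly of_int q"
  by (rule poly_eqI) (simp add: coeff_map_poly)

lemma map_poly_of_int_mult:
  "map_poly (of_int :: int \<Rightarrow> 'a::comm_ring_1) (p * q) = map_poly of_int p * map_poly of_int q"
  by (rule poly_eqI) (simp add: coeff_map_poly coeff_mult)

lemma poly_of_int_pseudo_remainder_eq_0: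
  fixes p q :: "int poly" and z :: "'a::{idom, ring_char_0}"
  assumes "smult a p = q * s + r" "a \<noteq> 0"
    and "poly (map_poly of_int p) z = 0" "poly (map_poly of_int q) z = 0"
  shows "poly (map_poly of_int r) z = 0"
proof -
  have "poly (map_poly of_int (smult a p)) z = poly (map_poly of_int (q * s + r)) z"
    using assms(1) by simp
  then show ?thesis
    using assms(2-4) by (simp add: map_poly_smult map_poly_of_int_add map_poly_of_int_mult)
qed

lemma poly_of_int_root_imp_degree_pos:
  fixes q :: "int poly" and z :: "'a::{idom, ring_char_0}"
  assumes "q \<noteq> 0" "poly (map_poly of_int q) z = 0"
  shows "degree q \<noteq> 0"
proof
  assume "degree q = 0"
  then obtain b where "q = [:b:]"
    by (rule degree_eq_zeroE)
  with assms show False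
    by (simp add: map_poly_pCons)
qed

lemma degree_le_if_common_root:
  fixes p q :: "int poly" and z :: "'a::{idom, ring_char_0}"
  assumes irr: "irreducible p" and pz: "poly (map_poly of_int p) z = 0"
    and "q \<noteq> 0" "poly (map_poly of_int q) z = 0"
  shows "degree p \<le> degree q"
  using assms(3,4)
proof (induction "degree q" arbitrary: q rule: less_induct)
  case less
  show ?case
  proof (rule ccontr)
    assume lt: "\<not> degree p \<le> degree q"
    define r where "r = pseudo_mod p q"
    obtain a s where "a \<noteq> 0" and div: "smult a p = q * s + r"
      using pseudo_mod(1)[of q p] less.prems(1) unfolding r_def by auto
    have "r = 0"
    proof (rule ccontr)
      assume "r \<noteq> 0"
      then have "degree r < degree q"
        using pseudo_mod(2)[of q p] less.prems(1) by (auto simp: r_def)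
      moreover have "poly (map_poly of_int r) z = 0"
        using div \<open>a \<noteq> 0\<close> pz less.prems(2) by (rule poly_of_int_pseudo_remainder_eq_0)
      ultimately have "degree p \<le> degree r"
        using less.hyps \<open>r \<noteq> 0\<close> by blast
      with \<open>degree r < degree q\<close> lt show False
        by linarith
    qed
    with div have "p dvd q * s"
      using dvd_smult[OF dvd_refl, of p a] by simp
    then have "p dvd q \<or> p dvd s"
      using irreducible_imp_prime_poly[OF irr] prime_elem_dvd_mult_iff by blast
    then show False
    proof
      assume "p dvd q"
      with less.prems(1) lt show False
        by (auto dest: dvd_imp_degree_le)
    next
      assume "p dvd s"
      then obtain t where "s = p * t"
        by (rule dvdE)
      with div \<open>r = 0\<close> have "p * [:a:] = p * (q * t)"
        by (simp add: algebra_simps)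
      then have "[:a:] = q * t"
        using irr mult_left_cancel by (metis irreducible_def)
      with \<open>a \<noteq> 0\<close> less.prems(1) have "degree q = 0"
        by (metis degree_mult_eq degree_pCons_0 add_eq_0_iff_both_eq_0 mult_zero_right pCons_eq_0_iff)
      with less.prems show False
        using poly_of_int_root_imp_degree_pos by blast
    qed
  qed
qed

lemma irreducible_dvd_if_common_root:
  fixes p q :: "int poly" and z :: "'a::{idom, ring_char_0}"
  assumes irr: "irreducible p"
    and pz: "poly (map_poly of_int p) z = 0" and qz: "poly (map_poly of_int q) z = 0"
  shows "p dvd q"
proof -
  have "p \<noteq> 0"
    using irr by auto
  define r where "r = pseudo_mod q p"
  obtain a s where "a \<noteq> 0" and div: "smult a q = p * s + r"
    using pseudo_mod(1)[of p q] \<open>p \<noteq> 0\<close> unfolding r_def by auto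
  have "r = 0"
  proof (rule ccontr)
    assume "r \<noteq> 0"
    moreover have "poly (map_poly of_int r) z = 0"
      using div \<open>a \<noteq> 0\<close> qz pz by (rule poly_of_int_pseudo_remainder_eq_0)
    ultimately have "degree p \<le> degree r"
      using irr pz by (intro degree_le_if_common_root)
    with \<open>r \<noteq> 0\<close> show False
      using pseudo_mod(2)[of p q] \<open>p \<noteq> 0\<close> by (auto simp: r_def)
  qed
  with div have "p dvd [:a:] * q"
    by simp
  moreover have "\<not> p dvd [:a:]"
    using poly_of_int_root_imp_degree_pos[OF \<open>p \<noteq> 0\<close> pz] \<open>a \<noteq> 0\<close> by (auto dest: dvd_imp_degree_le)
  ultimately show ?thesis
    using irreducible_imp_prime_poly[OF irr] prime_elem_dvd_mult_iff by blast
qed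

lemma poly_of_int_conjugate:
  fixes p q :: "int poly" and z w :: "'a::{idom, ring_char_0}"
  assumes "irreducible p"
    and "poly (map_poly of_int p) z = 0" "poly (map_poly of_int p) w = 0"
    and "poly (map_poly of_int q) z = 0"
  shows "poly (map_poly of_int q) w = 0"
proof -
  obtain s where "q = p * s"
    using irreducible_dvd_if_common_root[OF assms(1,2,4)] by (rule dvdE)
  with assms(3) show ?thesis
    by (simp add: map_poly_of_int_mult)
qed

section \<open>Integer combinations of sequence terms\<close>

definition int_comb :: "(nat \<Rightarrow> complex) \<Rightarrow> (nat \<Rightarrow> int) \<Rightarrow> (nat \<Rightarrow> nat) \<Rightarrow> nat set \<Rightarrow> complex" where
  "int_comb a \<epsilon> i K = (\<Sum>k\<in>K. of_int (\<epsilon> k) * a (i k))"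

definition zero_or_norm_ge :: "real \<Rightarrow> complex \<Rightarrow> bool" where
  "zero_or_norm_ge b z \<longleftrightarrow> z = 0 \<or> b \<le> norm z"

lemma zero_or_norm_ge_mono:
  "zero_or_norm_ge b z \<Longrightarrow> b' \<le> b \<Longrightarrow> zero_or_norm_ge b' z"
  unfolding zero_or_norm_ge_def by auto

lemma zero_or_norm_ge_add:
  assumes "zero_or_norm_ge b\<^sub>1 x" "zero_or_norm_ge b\<^sub>2 y" "norm x \<le> b\<^sub>2 / 2"
    and "b \<le> b\<^sub>1" "b \<le> b\<^sub>2 / 2"
  shows "zero_or_norm_ge b (x + y)"
proof (cases "y = 0")
  case False
  then have "b\<^sub>2 \<le> norm y"
    using assms(2) by (simp add: zero_or_norm_ge_def)
  moreover have "norm y - norm x \<le> norm (x + y)"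
    by (metis add.commute norm_diff_ineq)
  ultimately show ?thesis
    using assms(3,5) by (simp add: zero_or_norm_ge_def)
qed (use assms(1,4) zero_or_norm_ge_mono in simp)

lemma int_comb_group_by_index:
  assumes "finite K" "\<And>k. k \<in> K \<Longrightarrow> n \<le> i k \<and> i k \<le> n + D"
  shows "int_comb a \<epsilon> i K = int_comb a (\<lambda>g. \<Sum>k | k \<in> K \<and> i k = n + g. \<epsilon> k) ((+) n) {..D}"
proof -
  have "int_comb a \<epsilon> i K = (\<Sum>g\<le>D. \<Sum>k | k \<in> K \<and> i k - n = g. of_int (\<epsilon> k) * a (i k))"
    unfolding int_comb_def using assms
    by (intro sum.group[symmetric]) (auto simp: le_diff_conv add.commute)
  also have "\<dots> = (\<Sum>g\<le>D. \<Sum>k | k \<in> K \<and> i k = n + g. of_int (\<epsilon> k) * a (n + g))"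
    using assms(2) by (intro sum.cong refl) (auto intro!: sum.cong)
  finally show ?thesis
    by (simp add: int_comb_def sum_distrib_right)
qed

lemma le_Min_add_if_no_gap:
  fixes V :: "nat set"
  assumes "finite V" "v \<in> V"
    and no_gap: "\<And>v. v \<in> V \<Longrightarrow> Min V < v \<Longrightarrow> \<exists>u\<in>V. u < v \<and> v \<le> u + G"
  shows "v \<le> Min V + (card V - 1) * G"
proof -
  have "v \<le> Min V + card {u\<in>V. u < v} * G"
    using \<open>v \<in> V\<close>
  proof (induction v rule: less_induct)
    case (less v)
    show ?case
    proof (cases "Min V < v")
      case True
      then obtain u where u: "u \<in> V" "u < v" "v \<le> u + G"
        using no_gap less.prems by blast
      have "{w\<in>V. w < u} \<subset> {w\<in>V. w < v}"
        using u by auto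
      then have "card {w\<in>V. w < u} < card {w\<in>V. w < v}"
        using assms(1) by (intro psubset_card_mono) auto
      then have "card {w\<in>V. w < u} * G + G \<le> card {w\<in>V. w < v} * G"
        by (metis Suc_leI add.commute mult_Suc mult_le_mono1)
      with less.IH[OF u(2,1)] u(3) show ?thesis by linarith
    qed (use less.prems assms(1) in auto)
  qed
  moreover have "card {u\<in>V. u < v} \<le> card V - 1"
  proof -
    have "card {u\<in>V. u < v} \<le> card (V - {v})"
      using assms(1) by (intro card_mono) auto
    then show ?thesis
      using assms(1,2) by (simp add: card_Diff_singleton)
  qed
  ultimately show ?thesis
    by (meson add_left_mono mult_le_mono1 order_trans)
qed

lemma int_comb_partition:
  assumes "finite K"
  shows "int_comb a \<epsilon> i K = int_comb a \<epsilon> i {k\<in>K. P k} + int_comb a \<epsilon> i {k\<in>K. \<not> P k}"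
proof -
  have "int_comb a \<epsilon> i {k\<in>K. P k} + int_comb a \<epsilon> i {k\<in>K. \<not> P k} =
      int_comb a \<epsilon> i ({k\<in>K. P k} \<union> {k\<in>K. \<not> P k})"
    unfolding int_comb_def by (rule sum.union_disjoint[symmetric]) (use assms in auto)
  also have "{k\<in>K. P k} \<union> {k\<in>K. \<not> P k} = K"
    by auto
  finally show ?thesis ..
qed

lemma mono_on_if_stepwise_le:
  fixes f :: "nat \<Rightarrow> 'a::order"
  assumes "\<forall>k\<in>{2..m}. f (k - 1) \<le> f k"
  shows "mono_on {1..m} f"
proof (rule mono_onI)
  fix k k' assume "k \<in> {1..m}" "k' \<in> {1..m}" "k \<le> k'"
  from \<open>k \<le> k'\<close> \<open>k' \<in> {1..m}\<close> show "f k \<le> f k'"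
  proof (induction k' rule: dec_induct)
    case (step n)
    then have "Suc n \<in> {2..m}"
      using \<open>k \<in> {1..m}\<close> by auto
    then have "f n \<le> f (Suc n)"
      using assms by (metis diff_Suc_1)
    with step \<open>k \<in> {1..m}\<close> show ?case by fastforce
  qed simp
qed

lemma exists_mono_witness:
  fixes P :: "nat \<Rightarrow> nat \<Rightarrow> bool"
  assumes "\<And>m. \<exists>L. P m L" and "\<And>m L L'. P m L \<Longrightarrow> L \<le> L' \<Longrightarrow> P m L'"
  shows "\<exists>L. mono L \<and> (\<forall>m. P m (L m))"
proof -
  obtain L\<^sub>0 where L\<^sub>0: "\<And>m. P m (L\<^sub>0 m)"
    using assms(1) by metis
  define L where "L m = Max (L\<^sub>0 ` {..m})" for m
  have "mono L"
    unfolding L_def by (intro monoI Max_mono) auto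
  moreover have "P m (L m)" for m
    using assms(2)[OF L\<^sub>0] by (simp add: L_def)
  ultimately show ?thesis by blast
qed

section \<open>Sequences with separated shifted combinations\<close>

locale separated_growth =
  fixes a :: "nat \<Rightarrow> complex" and r C :: real
  assumes one_less_r: "1 < r"
    and norm_le: "norm (a n) \<le> C * r ^ n"
    and shift_comb_separated:
      "\<exists>\<delta>>0. \<forall>n\<ge>1. zero_or_norm_ge (\<delta> * r ^ n) (int_comb a c ((+) n) {..D})"
begin

lemma C_nonneg: "0 \<le> C"
  using order_trans[OF norm_ge_zero norm_le[of 0]] by simp

lemma norm_int_comb_le:
  assumes "finite K" "\<And>k. k \<in> K \<Longrightarrow> \<bar>\<epsilon> k\<bar> \<le> 1 \<and> i k \<le> t"
  shows "norm (int_comb a \<epsilon> i K) \<le> card K * C * r ^ t"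
proof -
  have "norm (int_comb a \<epsilon> i K) \<le> (\<Sum>k\<in>K. norm (of_int (\<epsilon> k) * a (i k)))"
    unfolding int_comb_def by (rule norm_sum)
  also have "\<dots> \<le> (\<Sum>k\<in>K. C * r ^ t)"
  proof (rule sum_mono)
    fix k assume "k \<in> K"
    then have "\<bar>\<epsilon> k\<bar> \<le> 1" "i k \<le> t"
      using assms(2) by auto
    have "r ^ i k \<le> r ^ t"
      using \<open>i k \<le> t\<close> one_less_r by (intro power_increasing) auto
    then have "norm (a (i k)) \<le> C * r ^ t"
      using norm_le[of "i k"] C_nonneg by (meson mult_left_mono order_trans)
    then have "\<bar>\<epsilon> k\<bar> * norm (a (i k)) \<le> 1 * (C * r ^ t)"
      using \<open>\<bar>\<epsilon> k\<bar> \<le> 1\<close> by (intro mult_mono) auto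
    then show "norm (of_int (\<epsilon> k) * a (i k)) \<le> C * r ^ t"
      by (simp add: norm_mult)
  qed
  finally show ?thesis by simp
qed

lemma ex_le_mult_power: "0 < b \<Longrightarrow> \<exists>G. x \<le> b * r ^ G"
  using real_arch_pow[OF one_less_r, of "x / b"] by (auto simp: field_simps intro: less_imp_le)

lemma eventually_shift_comb_separated:
  "\<forall>\<^sub>F \<delta> in at_right 0. \<forall>n\<ge>1. zero_or_norm_ge (\<delta> * r ^ n) (int_comb a c ((+) n) {..D})"
proof -
  obtain \<delta>\<^sub>0 where "0 < \<delta>\<^sub>0" and sep: "\<forall>n\<ge>1. zero_or_norm_ge (\<delta>\<^sub>0 * r ^ n) (int_comb a c ((+) n) {..D})"
    using shift_comb_separated by blast
  have "zero_or_norm_ge (\<delta> * r ^ n) (int_comb a c ((+) n) {..D})" if "\<delta> < \<delta>\<^sub>0" "1 \<le> n" for \<delta> n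
  proof (rule zero_or_norm_ge_mono)
    show "zero_or_norm_ge (\<delta>\<^sub>0 * r ^ n) (int_comb a c ((+) n) {..D})"
      using sep that(2) by blast
    show "\<delta> * r ^ n \<le> \<delta>\<^sub>0 * r ^ n"
      using that(1) one_less_r by (intro mult_right_mono) auto
  qed
  with \<open>0 < \<delta>\<^sub>0\<close> show ?thesis
    unfolding eventually_at_right_field by blast
qed

text \<open>There are only finitely many coefficient patterns of bounded size, and
  \<open>at_right 0\<close> turns their thresholds into a common one.\<close>

lemma uniform_shift_comb_separated:
  "\<exists>\<delta>>0. \<forall>c. (\<forall>g\<le>D. \<bar>c g\<bar> \<le> B) \<longrightarrow>
     (\<forall>n\<ge>1. zero_or_norm_ge (\<delta> * r ^ n) (int_comb a c ((+) n) {..D}))"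
proof -
  let ?sep = "\<lambda>\<delta> c. \<forall>n\<ge>1. zero_or_norm_ge (\<delta> * r ^ n) (int_comb a c ((+) n) {..D})"
  have "\<forall>\<^sub>F \<delta> in at_right 0. 0 < \<delta> \<and> (\<forall>c\<in>{..D} \<rightarrow>\<^sub>E {-B..B}. ?sep \<delta> c)"
    by (intro eventually_conj eventually_at_right_less eventually_ball_finite finite_PiE
        ballI eventually_shift_comb_separated) auto
  then obtain \<delta> where "0 < \<delta>" and sep: "\<forall>c\<in>{..D} \<rightarrow>\<^sub>E {-B..B}. ?sep \<delta> c"
    using eventually_happens' trivial_limit_at_right_real by blast
  have "?sep \<delta> c" if "\<forall>g\<le>D. \<bar>c g\<bar> \<le> B" for c
  proof -
    have "int_comb a c ((+) n) {..D} = int_comb a (restrict c {..D}) ((+) n) {..D}" for n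
      unfolding int_comb_def by (intro sum.cong) auto
    moreover have "restrict c {..D} \<in> {..D} \<rightarrow>\<^sub>E {-B..B}"
      using that by (auto simp: abs_le_iff)
    ultimately show ?thesis
      using sep by (simp only:) blast
  qed
  with \<open>0 < \<delta>\<close> show ?thesis by blast
qed

lemma bounded_spread_separated:
  "\<exists>\<delta>>0. \<forall>K \<epsilon> i n. finite K \<longrightarrow> card K \<le> m \<longrightarrow>
     (\<forall>k\<in>K. \<bar>\<epsilon> k\<bar> \<le> 1 \<and> n \<le> i k \<and> i k \<le> n + D) \<longrightarrow> 1 \<le> n \<longrightarrow>
     zero_or_norm_ge (\<delta> * r ^ n) (int_comb a \<epsilon> i K)"
proof -
  obtain \<delta> where "\<delta> > 0" and sep: "\<And>c n. \<forall>g\<le>D. \<bar>c g\<bar> \<le> int m \<Longrightarrow> 1 \<le> n \<Longrightarrow>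
      zero_or_norm_ge (\<delta> * r ^ n) (int_comb a c ((+) n) {..D})"
    using uniform_shift_comb_separated[of D "int m"] by blast
  have "zero_or_norm_ge (\<delta> * r ^ n) (int_comb a \<epsilon> i K)"
    if K: "finite K" "card K \<le> m" "\<forall>k\<in>K. \<bar>\<epsilon> k\<bar> \<le> 1 \<and> n \<le> i k \<and> i k \<le> n + D" "1 \<le> n"
    for K \<epsilon> i n
  proof -
    define c where "c g = (\<Sum>k | k \<in> K \<and> i k = n + g. \<epsilon> k)" for g
    have "\<bar>c g\<bar> \<le> int m" for g
    proof -
      have "\<bar>c g\<bar> \<le> (\<Sum>k | k \<in> K \<and> i k = n + g. \<bar>\<epsilon> k\<bar>)"
        unfolding c_def by (rule sum_abs)
      also have "\<dots> \<le> int (card {k \<in> K. i k = n + g}) * 1"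
        using K(3) by (intro sum_bounded_above) auto
      also have "\<dots> \<le> int m"
        using K(1,2) card_mono[OF K(1), of "{k \<in> K. i k = n + g}"] by auto
      finally show ?thesis .
    qed
    moreover have "int_comb a \<epsilon> i K = int_comb a c ((+) n) {..D}"
      unfolding c_def using K by (intro int_comb_group_by_index) auto
    ultimately show ?thesis
      using sep K(4) by simp
  qed
  with \<open>\<delta> > 0\<close> show ?thesis by blast
qed

lemma norm_int_comb_below_gap:
  assumes "finite K" "card K \<le> m" "\<forall>k\<in>K. \<bar>\<epsilon> k\<bar> \<le> 1 \<and> i k + G < v"
    and "0 \<le> b" "m * C \<le> b * r ^ G"
  shows "norm (int_comb a \<epsilon> i K) \<le> b * r ^ v"
proof (cases "K = {}")
  case True
  then show ?thesis
    using assms(4) one_less_r by (simp add: int_comb_def)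
next
  case False
  then have "Suc G \<le> v"
    using assms(3) by force
  have "norm (int_comb a \<epsilon> i K) \<le> card K * C * r ^ (v - Suc G)"
    using assms(1,3) \<open>Suc G \<le> v\<close> by (intro norm_int_comb_le) (auto simp: le_diff_conv2)
  also have "\<dots> \<le> b * r ^ G * r ^ (v - Suc G)"
  proof (rule mult_right_mono)
    have "card K * C \<le> m * C"
      using assms(2) C_nonneg by (intro mult_right_mono) auto
    with assms(5) show "card K * C \<le> b * r ^ G"
      by linarith
  qed (use one_less_r in simp)
  also have "\<dots> \<le> b * r ^ v"
  proof -
    have "r ^ G * r ^ (v - Suc G) \<le> r ^ v"
      unfolding power_add[symmetric] using \<open>Suc G \<le> v\<close> one_less_r by (intro power_increasing) auto
    then show ?thesis
      using assms(4) by (simp add: mult.assoc mult_left_mono)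
  qed
  finally show ?thesis .
qed

definition sums_separated :: "nat \<Rightarrow> real \<Rightarrow> bool" where
  "sums_separated m \<delta> \<longleftrightarrow> (\<forall>K \<epsilon> i n. finite K \<longrightarrow> card K \<le> m \<longrightarrow>
     (\<forall>k\<in>K. \<bar>\<epsilon> k\<bar> \<le> 1 \<and> n \<le> i k) \<longrightarrow> 1 \<le> n \<longrightarrow>
     zero_or_norm_ge (\<delta> * r ^ n) (int_comb a \<epsilon> i K))"

lemma sums_separatedD:
  "sums_separated m \<delta> \<Longrightarrow> finite K \<Longrightarrow> card K \<le> m \<Longrightarrow>
    \<forall>k\<in>K. \<bar>\<epsilon> k\<bar> \<le> 1 \<and> n \<le> i k \<Longrightarrow> 1 \<le> n \<Longrightarrow>
    zero_or_norm_ge (\<delta> * r ^ n) (int_comb a \<epsilon> i K)"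
  unfolding sums_separated_def by blast

lemma no_gap_separated:
  "\<exists>\<delta>>0. \<forall>K \<epsilon> i n. finite K \<longrightarrow> card K \<le> m \<longrightarrow>
     (\<forall>k\<in>K. \<bar>\<epsilon> k\<bar> \<le> 1 \<and> n \<le> i k) \<longrightarrow> 1 \<le> n \<longrightarrow>
     (\<forall>v\<in>i ` K. Min (i ` K) < v \<longrightarrow> (\<exists>u\<in>i ` K. u < v \<and> v \<le> u + G)) \<longrightarrow>
     zero_or_norm_ge (\<delta> * r ^ n) (int_comb a \<epsilon> i K)"
proof -
  obtain \<delta> where "0 < \<delta>" and spread: "\<And>K \<epsilon> i n. finite K \<Longrightarrow> card K \<le> m \<Longrightarrow>
      \<forall>k\<in>K. \<bar>\<epsilon> k\<bar> \<le> 1 \<and> n \<le> i k \<and> i k \<le> n + m * G \<Longrightarrow> 1 \<le> n \<Longrightarrow>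
      zero_or_norm_ge (\<delta> * r ^ n) (int_comb a \<epsilon> i K)"
    using bounded_spread_separated[of m "m * G"] by blast
  have "zero_or_norm_ge (\<delta> * r ^ n) (int_comb a \<epsilon> i K)"
    if K: "finite K" "card K \<le> m" "\<forall>k\<in>K. \<bar>\<epsilon> k\<bar> \<le> 1 \<and> n \<le> i k" "1 \<le> n"
      and no_gap: "\<forall>v\<in>i ` K. Min (i ` K) < v \<longrightarrow> (\<exists>u\<in>i ` K. u < v \<and> v \<le> u + G)"
    for K \<epsilon> i n
  proof (cases "K = {}")
    case False
    define n\<^sub>0 where "n\<^sub>0 = Min (i ` K)"
    have "n \<le> n\<^sub>0"
      using K(1,3) False by (simp add: n\<^sub>0_def Min_ge_iff)
    have "card (i ` K) - 1 \<le> m"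
      using card_image_le[OF K(1), of i] K(2) by linarith
    then have "i k \<le> n\<^sub>0 + m * G" if "k \<in> K" for k
      using le_Min_add_if_no_gap[of "i ` K" "i k" G] K(1) that no_gap
      by (fastforce simp: n\<^sub>0_def intro: order_trans add_left_mono mult_le_mono1)
    then have "zero_or_norm_ge (\<delta> * r ^ n\<^sub>0) (int_comb a \<epsilon> i K)"
      using K \<open>n \<le> n\<^sub>0\<close> by (intro spread) (auto simp: n\<^sub>0_def)
    moreover have "\<delta> * r ^ n \<le> \<delta> * r ^ n\<^sub>0"
      using \<open>n \<le> n\<^sub>0\<close> \<open>0 < \<delta>\<close> one_less_r by (intro mult_left_mono power_increasing) auto
    ultimately show ?thesis
      by (rule zero_or_norm_ge_mono)
  qed (simp add: int_comb_def zero_or_norm_ge_def)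
  with \<open>0 < \<delta>\<close> show ?thesis by blast
qed

text \<open>Below a gap longer than \<open>G\<close> the terms add up to too little to cancel those above it.\<close>

lemma sums_separated_at_gap:
  assumes sep: "sums_separated m \<delta>" and "0 < \<delta>" and G: "m * C \<le> \<delta> / 2 * r ^ G"
    and K: "finite K" "card K \<le> Suc m" "\<forall>k\<in>K. \<bar>\<epsilon> k\<bar> \<le> 1 \<and> n \<le> i k" "1 \<le> n"
    and gap: "v \<in> i ` K" "Min (i ` K) < v" "\<forall>u\<in>i ` K. u < v \<longrightarrow> u + G < v"
  shows "zero_or_norm_ge (\<delta> / 2 * r ^ n) (int_comb a \<epsilon> i K)"
proof -
  define K\<^sub>1 where "K\<^sub>1 = {k\<in>K. i k < v}"
  define K\<^sub>2 where "K\<^sub>2 = {k\<in>K. \<not> i k < v}"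
  have "Min (i ` K) \<in> i ` K"
    using K(1) gap(1) by (intro Min_in) auto
  then have "K\<^sub>1 \<noteq> {}" "K\<^sub>2 \<noteq> {}"
    using gap(1,2) by (auto simp: K\<^sub>1_def K\<^sub>2_def)
  then have "card K\<^sub>1 < card K" "card K\<^sub>2 < card K"
    using K(1) by (auto simp: K\<^sub>1_def K\<^sub>2_def intro!: psubset_card_mono)
  then have card: "card K\<^sub>1 \<le> m" "card K\<^sub>2 \<le> m"
    using K(2) by auto
  have "n \<le> Min (i ` K)"
    using K(1,3) gap(1) by (auto intro: Min.boundedI)
  then have "n \<le> v"
    using gap(2) by linarith
  have small: "norm (int_comb a \<epsilon> i K\<^sub>1) \<le> \<delta> * r ^ v / 2"
    using norm_int_comb_below_gap[of K\<^sub>1 m \<epsilon> i G v "\<delta> / 2"] K(1,3) card(1) gap(3) \<open>0 < \<delta>\<close> G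
    by (auto simp: K\<^sub>1_def)
  have S\<^sub>1: "zero_or_norm_ge (\<delta> * r ^ n) (int_comb a \<epsilon> i K\<^sub>1)"
    using sep card(1) K by (intro sums_separatedD) (auto simp: K\<^sub>1_def)
  have S\<^sub>2: "zero_or_norm_ge (\<delta> * r ^ v) (int_comb a \<epsilon> i K\<^sub>2)"
    using sep card(2) K \<open>n \<le> v\<close> by (intro sums_separatedD) (auto simp: K\<^sub>2_def)
  have "r ^ n \<le> r ^ v"
    using \<open>n \<le> v\<close> one_less_r by (intro power_increasing) auto
  then have "\<delta> / 2 * r ^ n \<le> \<delta> * r ^ v / 2" "\<delta> / 2 * r ^ n \<le> \<delta> * r ^ n"
    using \<open>0 < \<delta>\<close> one_less_r by auto
  with S\<^sub>1 S\<^sub>2 small show ?thesis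
    unfolding int_comb_partition[OF K(1), where P = "\<lambda>k. i k < v"] K\<^sub>1_def[symmetric] K\<^sub>2_def[symmetric]
    by (intro zero_or_norm_ge_add)
qed

lemma exists_sums_separated: "\<exists>\<delta>>0. sums_separated m \<delta>"
proof (induction m)
  case 0
  have "sums_separated 0 1"
    by (auto simp: sums_separated_def int_comb_def zero_or_norm_ge_def)
  then show ?case
    using zero_less_one by blast
next
  case (Suc m)
  then obtain \<delta>\<^sub>0 where "0 < \<delta>\<^sub>0" and sep: "sums_separated m \<delta>\<^sub>0"
    by blast
  then obtain G where G: "m * C \<le> \<delta>\<^sub>0 / 2 * r ^ G"
    using ex_le_mult_power[of "\<delta>\<^sub>0 / 2"] by auto
  obtain \<delta>\<^sub>1 where "0 < \<delta>\<^sub>1" and sep_no_gap: "\<And>K \<epsilon> i n. finite K \<Longrightarrow> card K \<le> Suc m \<Longrightarrow>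
      \<forall>k\<in>K. \<bar>\<epsilon> k\<bar> \<le> 1 \<and> n \<le> i k \<Longrightarrow> 1 \<le> n \<Longrightarrow>
      \<forall>v\<in>i ` K. Min (i ` K) < v \<longrightarrow> (\<exists>u\<in>i ` K. u < v \<and> v \<le> u + G) \<Longrightarrow>
      zero_or_norm_ge (\<delta>\<^sub>1 * r ^ n) (int_comb a \<epsilon> i K)"
    using no_gap_separated[of "Suc m" G] by blast
  define \<delta> where "\<delta> = min \<delta>\<^sub>1 (\<delta>\<^sub>0 / 2)"
  have "zero_or_norm_ge (\<delta> * r ^ n) (int_comb a \<epsilon> i K)"
    if K: "finite K" "card K \<le> Suc m" "\<forall>k\<in>K. \<bar>\<epsilon> k\<bar> \<le> 1 \<and> n \<le> i k" "1 \<le> n" for K \<epsilon> i n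
  proof -
    have le: "\<delta> * r ^ n \<le> \<delta>\<^sub>1 * r ^ n" "\<delta> * r ^ n \<le> \<delta>\<^sub>0 / 2 * r ^ n"
      using one_less_r by (auto simp: \<delta>_def intro!: mult_right_mono)
    consider (no_gap) "\<forall>v\<in>i ` K. Min (i ` K) < v \<longrightarrow> (\<exists>u\<in>i ` K. u < v \<and> v \<le> u + G)"
      | (gap) v where "v \<in> i ` K" "Min (i ` K) < v" "\<forall>u\<in>i ` K. u < v \<longrightarrow> u + G < v"
      by (meson not_le)
    then show ?thesis
    proof cases
      case no_gap
      show ?thesis
        by (rule zero_or_norm_ge_mono[OF sep_no_gap[OF K no_gap] le(1)])
    next
      case gap
      show ?thesis
        by (rule zero_or_norm_ge_mono[OF sums_separated_at_gap[OF sep \<open>0 < \<delta>\<^sub>0\<close> G K gap] le(2)])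
    qed
  qed
  moreover have "0 < \<delta>"
    using \<open>0 < \<delta>\<^sub>0\<close> \<open>0 < \<delta>\<^sub>1\<close> by (simp add: \<delta>_def)
  ultimately show ?case
    unfolding sums_separated_def by blast
qed

lemma int_comb_split_at_gap:
  "\<exists>L. \<forall>K\<^sub>1 K\<^sub>2 \<epsilon> i. finite K\<^sub>1 \<longrightarrow> finite K\<^sub>2 \<longrightarrow> card K\<^sub>1 \<le> m \<longrightarrow> card K\<^sub>2 \<le> m \<longrightarrow>
     (\<forall>k\<in>K\<^sub>1 \<union> K\<^sub>2. \<bar>\<epsilon> k\<bar> \<le> 1 \<and> 1 \<le> i k) \<longrightarrow> (\<forall>k\<^sub>1\<in>K\<^sub>1. \<forall>k\<^sub>2\<in>K\<^sub>2. i k\<^sub>1 + L < i k\<^sub>2) \<longrightarrow>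
     int_comb a \<epsilon> i K\<^sub>1 + int_comb a \<epsilon> i K\<^sub>2 = 0 \<longrightarrow>
     int_comb a \<epsilon> i K\<^sub>1 = 0 \<and> int_comb a \<epsilon> i K\<^sub>2 = 0"
proof -
  obtain \<delta> where "0 < \<delta>" and sep: "sums_separated m \<delta>"
    using exists_sums_separated by blast
  then obtain L where L: "m * C \<le> \<delta> / 2 * r ^ L"
    using ex_le_mult_power[of "\<delta> / 2"] by auto
  have "int_comb a \<epsilon> i K\<^sub>1 = 0 \<and> int_comb a \<epsilon> i K\<^sub>2 = 0"
    if K: "finite K\<^sub>1" "finite K\<^sub>2" "card K\<^sub>1 \<le> m" "card K\<^sub>2 \<le> m"
      "\<forall>k\<in>K\<^sub>1 \<union> K\<^sub>2. \<bar>\<epsilon> k\<bar> \<le> 1 \<and> 1 \<le> i k"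
      "\<forall>k\<^sub>1\<in>K\<^sub>1. \<forall>k\<^sub>2\<in>K\<^sub>2. i k\<^sub>1 + L < i k\<^sub>2"
      and sum: "int_comb a \<epsilon> i K\<^sub>1 + int_comb a \<epsilon> i K\<^sub>2 = 0"
    for K\<^sub>1 K\<^sub>2 \<epsilon> i
  proof (cases "K\<^sub>2 = {}")
    case False
    define v where "v = Min (i ` K\<^sub>2)"
    have "v \<in> i ` K\<^sub>2"
      using K(2) False by (simp add: v_def)
    then have "\<forall>k\<in>K\<^sub>1. \<bar>\<epsilon> k\<bar> \<le> 1 \<and> i k + L < v" "1 \<le> v"
      using K(5,6) by fastforce+
    then have "norm (int_comb a \<epsilon> i K\<^sub>1) \<le> \<delta> / 2 * r ^ v"
      using K(1,3) \<open>0 < \<delta>\<close> L by (intro norm_int_comb_below_gap) auto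
    moreover have "zero_or_norm_ge (\<delta> * r ^ v) (int_comb a \<epsilon> i K\<^sub>2)"
      using sep K(2,4,5) \<open>1 \<le> v\<close> by (intro sums_separatedD) (auto simp: v_def)
    moreover have "\<delta> / 2 * r ^ v < \<delta> * r ^ v"
      using \<open>0 < \<delta>\<close> one_less_r by simp
    ultimately show ?thesis
      using sum by (auto simp: zero_or_norm_ge_def add_eq_0_iff)
  qed (use sum in \<open>simp add: int_comb_def\<close>)
  then show ?thesis by blast
qed

definition vanishing_sums_split :: "nat \<Rightarrow> nat \<Rightarrow> bool" where
  "vanishing_sums_split m L \<longleftrightarrow> (\<forall>(\<epsilon> :: nat \<Rightarrow> int) (i :: nat \<Rightarrow> nat) j.
     (\<forall>k\<in>{1..m}. \<epsilon> k = 1 \<or> \<epsilon> k = -1) \<longrightarrow>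
     1 \<le> i 1 \<longrightarrow>
     (\<forall>k\<in>{2..m}. i (k - 1) \<le> i k) \<longrightarrow>
     j \<in> {2..m} \<longrightarrow> i j - i (j - 1) > L \<longrightarrow>
     (\<Sum>k=1..m. of_int (\<epsilon> k) * a (i k)) = 0 \<longrightarrow>
     (\<Sum>k=1..j-1. of_int (\<epsilon> k) * a (i k)) = 0 \<and>
     (\<Sum>k=j..m. of_int (\<epsilon> k) * a (i k)) = 0)"

lemma exists_vanishing_sums_split: "\<exists>L. vanishing_sums_split m L"
proof -
  obtain L where split: "\<And>K\<^sub>1 K\<^sub>2 \<epsilon> i. finite K\<^sub>1 \<Longrightarrow> finite K\<^sub>2 \<Longrightarrow> card K\<^sub>1 \<le> m \<Longrightarrow> card K\<^sub>2 \<le> m \<Longrightarrow>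
      \<forall>k\<in>K\<^sub>1 \<union> K\<^sub>2. \<bar>\<epsilon> k\<bar> \<le> 1 \<and> 1 \<le> i k \<Longrightarrow> \<forall>k\<^sub>1\<in>K\<^sub>1. \<forall>k\<^sub>2\<in>K\<^sub>2. i k\<^sub>1 + L < i k\<^sub>2 \<Longrightarrow>
      int_comb a \<epsilon> i K\<^sub>1 + int_comb a \<epsilon> i K\<^sub>2 = 0 \<Longrightarrow>
      int_comb a \<epsilon> i K\<^sub>1 = 0 \<and> int_comb a \<epsilon> i K\<^sub>2 = 0"
    using int_comb_split_at_gap[of m] by blast
  have "int_comb a \<epsilon> i {1..j-1} = 0 \<and> int_comb a \<epsilon> i {j..m} = 0"
    if \<epsilon>: "\<forall>k\<in>{1..m}. \<epsilon> k = 1 \<or> \<epsilon> k = -1" and "1 \<le> i 1"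
      and step: "\<forall>k\<in>{2..m}. i (k - 1) \<le> i k" and j: "j \<in> {2..m}" "i j - i (j - 1) > L"
      and sum: "int_comb a \<epsilon> i {1..m} = 0"
    for \<epsilon> i j
  proof (rule split)
    have mono: "mono_on {1..m} i"
      using step by (rule mono_on_if_stepwise_le)
    show "\<forall>k\<in>{1..j-1} \<union> {j..m}. \<bar>\<epsilon> k\<bar> \<le> 1 \<and> 1 \<le> i k"
    proof
      fix k assume "k \<in> {1..j-1} \<union> {j..m}"
      then have "k \<in> {1..m}"
        using j(1) by auto
      then show "\<bar>\<epsilon> k\<bar> \<le> 1 \<and> 1 \<le> i k"
        using \<epsilon> \<open>1 \<le> i 1\<close> mono_onD[OF mono, of 1 k] by force
    qed
    show "\<forall>k\<^sub>1\<in>{1..j-1}. \<forall>k\<^sub>2\<in>{j..m}. i k\<^sub>1 + L < i k\<^sub>2"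
    proof (intro ballI)
      fix k\<^sub>1 k\<^sub>2 assume "k\<^sub>1 \<in> {1..j-1}" "k\<^sub>2 \<in> {j..m}"
      then have "i k\<^sub>1 \<le> i (j - 1)" "i j \<le> i k\<^sub>2"
        using j(1) by (auto intro!: mono_onD[OF mono])
      with j(2) show "i k\<^sub>1 + L < i k\<^sub>2"
        by linarith
    qed
    have "{1..m} = {1..j-1} \<union> {j..m}"
      using j(1) by auto
    then have "int_comb a \<epsilon> i {1..m} = int_comb a \<epsilon> i {1..j-1} + int_comb a \<epsilon> i {j..m}"
      unfolding int_comb_def by (simp only:) (rule sum.union_disjoint; auto)
    with sum show "int_comb a \<epsilon> i {1..j-1} + int_comb a \<epsilon> i {j..m} = 0"
      by simp
  qed (use j(1) in auto)
  then show ?thesis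
    unfolding vanishing_sums_split_def int_comb_def by blast
qed

theorem exists_mono_vanishing_sums_split: "\<exists>L. mono L \<and> (\<forall>m. vanishing_sums_split m (L m))"
proof (rule exists_mono_witness[OF exists_vanishing_sums_split])
  show "vanishing_sums_split m L'" if "vanishing_sums_split m L" "L \<le> L'" for m L L'
    using that unfolding vanishing_sums_split_def by (meson le_less_trans)
qed

end

section \<open>Linear recurrences in the standing setting\<close>

lemma poly_of_int_sum_monom:
  "poly (map_poly of_int (\<Sum>g\<le>D. monom (e g) g)) (x :: 'a::comm_ring_1) = (\<Sum>g\<le>D. of_int (e g) * x ^ g)"
proof -
  have "map_poly of_int (\<Sum>g\<le>D. monom (e g) g) = (\<Sum>g\<le>D. monom (of_int (e g) :: 'a) g)"
    by (rule poly_eqI) (simp add: coeff_map_poly coeff_sum coeff_monom of_int_sum[symmetric] if_distrib cong: if_cong)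
  then show ?thesis
    by (simp add: poly_sum poly_monom)
qed

lemma int_comb_shift_lrs:
  "int_comb (lrs d c lam) e ((+) n) {..D} =
     lrs d (\<lambda>l. c l * poly (map_poly of_int (\<Sum>g\<le>D. monom (e g) g)) (lam l)) lam n"
  unfolding int_comb_def lrs_def poly_of_int_sum_monom
  by (simp add: sum_distrib_left sum_distrib_right power_add mult_ac sum.swap[of _ "{..D}"])

lemma norm_lrs_le:
  assumes "\<And>l. l \<in> {1..d} \<Longrightarrow> norm (lam l) \<le> R"
  shows "norm (lrs d c lam n) \<le> (\<Sum>l=1..d. norm (c l)) * R ^ n"
proof -
  have "norm (lrs d c lam n) \<le> (\<Sum>l=1..d. norm (c l) * norm (lam l) ^ n)"
    unfolding lrs_def by (rule norm_sum[THEN order_trans]) (simp add: norm_mult norm_power)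
  also have "\<dots> \<le> (\<Sum>l=1..d. norm (c l) * R ^ n)"
    using assms by (intro sum_mono mult_left_mono power_mono) auto
  finally show ?thesis
    by (simp add: sum_distrib_right)
qed

lemma lrs_div_power_tendsto:
  assumes "1 \<le> d" "lam 1 \<noteq> 0" "\<And>l. l \<in> {2..d} \<Longrightarrow> norm (lam l) < norm (lam 1)"
  shows "(\<lambda>n. lrs d c lam n / lam 1 ^ n) \<longlonglongrightarrow> c 1"
proof -
  have "lrs d c lam n / lam 1 ^ n = c 1 + (\<Sum>l=2..d. c l * (lam l / lam 1) ^ n)" for n
    using sum.atLeast_Suc_atMost[OF assms(1), of "\<lambda>l. c l * lam l ^ n"] assms(2)
    by (simp add: lrs_def numeral_2_eq_2 add_divide_distrib sum_divide_distrib power_divide)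
  moreover have "(\<lambda>n. \<Sum>l=2..d. c l * (lam l / lam 1) ^ n) \<longlonglongrightarrow> (\<Sum>l=2..d. c l * 0)"
    using assms(2,3) by (intro tendsto_sum tendsto_mult_left LIMSEQ_power_zero) (simp add: norm_divide)
  then have "(\<lambda>n. c 1 + (\<Sum>l=2..d. c l * (lam l / lam 1) ^ n)) \<longlonglongrightarrow> c 1 + 0"
    by (intro tendsto_add tendsto_const) simp
  ultimately show ?thesis
    by simp
qed

lemma lrs_eventually_norm_ge:
  assumes "1 \<le> d" "lam 1 \<noteq> 0" "\<And>l. l \<in> {2..d} \<Longrightarrow> norm (lam l) < norm (lam 1)" "c 1 \<noteq> 0"
  shows "\<forall>\<^sub>F n in sequentially. norm (c 1) / 2 * norm (lam 1) ^ n \<le> norm (lrs d c lam n)"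
proof -
  have "(\<lambda>n. norm (lrs d c lam n / lam 1 ^ n)) \<longlonglongrightarrow> norm (c 1)"
    using lrs_div_power_tendsto[where c = c and lam = lam, OF assms(1-3)] by (rule tendsto_norm)
  moreover have "norm (c 1) / 2 < norm (c 1)"
    using assms(4) by simp
  ultimately have "\<forall>\<^sub>F n in sequentially. norm (c 1) / 2 < norm (lrs d c lam n / lam 1 ^ n)"
    by (rule order_tendstoD)
  then show ?thesis
  proof (rule eventually_mono)
    fix n assume "norm (c 1) / 2 < norm (lrs d c lam n / lam 1 ^ n)"
    then show "norm (c 1) / 2 * norm (lam 1) ^ n \<le> norm (lrs d c lam n)"
      using assms(2) by (simp add: norm_divide norm_power pos_less_divide_eq)
  qed
qed

lemma zero_or_norm_ge_if_Ints:
  fixes x :: "nat \<Rightarrow> complex"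
  assumes "\<And>n. 1 \<le> n \<Longrightarrow> x n \<in> \<int>" "1 \<le> r" "0 < \<delta>"
    and "\<forall>\<^sub>F n in sequentially. \<delta> * r ^ n \<le> norm (x n)"
  shows "\<exists>\<delta>'>0. \<forall>n\<ge>1. zero_or_norm_ge (\<delta>' * r ^ n) (x n)"
proof -
  obtain N where N: "\<And>n. N \<le> n \<Longrightarrow> \<delta> * r ^ n \<le> norm (x n)"
    using assms(4) unfolding eventually_sequentially by blast
  define \<delta>' where "\<delta>' = min \<delta> (1 / r ^ N)"
  have "zero_or_norm_ge (\<delta>' * r ^ n) (x n)" if "1 \<le> n" for n
  proof (cases "N \<le> n")
    case True
    have "\<delta>' * r ^ n \<le> \<delta> * r ^ n"
      using assms(2) by (intro mult_right_mono) (auto simp: \<delta>'_def)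
    with N[OF True] show ?thesis
      by (simp add: zero_or_norm_ge_def)
  next
    case False
    have "\<delta>' * r ^ n \<le> 1 / r ^ N * r ^ N"
      using False assms(2) by (intro mult_mono power_increasing) (auto simp: \<delta>'_def)
    also have "\<dots> = 1"
      using assms(2) by simp
    also have "1 \<le> norm (x n)" if "x n \<noteq> 0"
      using assms(1)[OF \<open>1 \<le> n\<close>] that by (auto elim!: Ints_cases)
    finally show ?thesis
      unfolding zero_or_norm_ge_def by blast
  qed
  moreover have "0 < \<delta>'"
    using assms(2,3) by (simp add: \<delta>'_def)
  ultimately show ?thesis by blast
qed

lemma standing_setting_dominant:
  assumes "standing_setting d c lam"
  shows "1 \<le> d" "1 < Re (lam 1)" "c 1 \<noteq> 0" "norm (lam 1) = Re (lam 1)"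
    "l \<in> {2..d} \<Longrightarrow> norm (lam l) < norm (lam 1)"
proof -
  have real: "lam 1 \<in> \<real>" and gt: "1 < Re (lam 1)" and dom: "\<forall>k\<in>{2..d}. norm (lam k) < Re (lam 1)"
    using assms unfolding standing_setting_def by blast+
  show "1 \<le> d" "c 1 \<noteq> 0"
    using assms unfolding standing_setting_def by blast+
  show "1 < Re (lam 1)"
    by (fact gt)
  show norm1: "norm (lam 1) = Re (lam 1)"
    using real gt by (auto elim!: Reals_cases)
  show "l \<in> {2..d} \<Longrightarrow> norm (lam l) < norm (lam 1)"
    using dom norm1 by simp
qed

lemma standing_setting_conjugate:
  assumes "standing_setting d c lam" "poly (map_poly of_int q) (lam 1) = 0" "l \<in> {1..d}"
  shows "poly (map_poly of_int q) (lam l) = 0"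
proof -
  obtain p :: "int poly" where p: "irreducible p" "{z. poly (map_poly of_int p) z = 0} = lam ` {1..d}"
    using assms(1) unfolding standing_setting_def by (elim conjE exE) simp
  have root: "poly (map_poly of_int p) (lam k) = 0" if "k \<in> {1..d}" for k
  proof -
    have "lam k \<in> {z. poly (map_poly of_int p) z = 0}"
      using p(2) that by (simp only: image_eqI)
    then show ?thesis by simp
  qed
  show ?thesis
    using standing_setting_dominant(1)[OF assms(1)]
    by (intro poly_of_int_conjugate[OF p(1) root[of 1] root[OF assms(3)] assms(2)]) auto
qed

lemma standing_setting_lrs_Ints:
  assumes "standing_setting d c lam" "1 \<le> n"
  shows "lrs d c lam n \<in> \<int>"
proof -
  have "\<forall>n\<ge>1. \<exists>z::int. z > 0 \<and> lrs d c lam n = of_int z"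
    using assms(1) unfolding standing_setting_def by (elim conjE)
  with assms(2) show ?thesis
    by (metis Ints_of_int)
qed

lemma standing_setting_shift_comb_separated:
  assumes "standing_setting d c lam"
  shows "\<exists>\<delta>>0. \<forall>n\<ge>1. zero_or_norm_ge (\<delta> * Re (lam 1) ^ n) (int_comb (lrs d c lam) e ((+) n) {..D})"
proof -
  define w where "w l = poly (map_poly of_int (\<Sum>g\<le>D. monom (e g) g)) (lam l)" for l
  have shift: "int_comb (lrs d c lam) e ((+) n) {..D} = lrs d (\<lambda>l. c l * w l) lam n" for n
    unfolding w_def by (rule int_comb_shift_lrs)
  note dominant = standing_setting_dominant[OF assms]
  show ?thesis
  proof (cases "w 1 = 0")
    case True
    then have "w l = 0" if "l \<in> {1..d}" for l
      using standing_setting_conjugate[OF assms _ that] unfolding w_def by blast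
    then have "int_comb (lrs d c lam) e ((+) n) {..D} = 0" for n
      unfolding shift lrs_def by simp
    then show ?thesis
      by (intro exI[of _ 1]) (simp add: zero_or_norm_ge_def)
  next
    case False
    have "lam 1 \<noteq> 0"
      using dominant(2,4) by auto
    then have "\<forall>\<^sub>F n in sequentially.
        norm (c 1 * w 1) / 2 * norm (lam 1) ^ n \<le> norm (lrs d (\<lambda>l. c l * w l) lam n)"
      using dominant(1,3,5) False by (intro lrs_eventually_norm_ge) auto
    then have large: "\<forall>\<^sub>F n in sequentially.
        norm (c 1 * w 1) / 2 * Re (lam 1) ^ n \<le> norm (int_comb (lrs d c lam) e ((+) n) {..D})"
      by (simp only: shift dominant(4))
    have ints: "int_comb (lrs d c lam) e ((+) n) {..D} \<in> \<int>" if "1 \<le> n" for n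
      unfolding int_comb_def using that
      by (intro Ints_sum Ints_mult Ints_of_int standing_setting_lrs_Ints[OF assms]) auto
    have "0 < norm (c 1 * w 1) / 2"
      using dominant(3) False by simp
    with dominant(2) show ?thesis
      using zero_or_norm_ge_if_Ints[OF ints _ _ large] by simp
  qed
qed

lemma standing_setting_separated_growth:
  assumes "standing_setting d c lam"
  shows "separated_growth (lrs d c lam) (Re (lam 1)) (\<Sum>l=1..d. norm (c l))"
proof
  show "1 < Re (lam 1)"
    using assms by (rule standing_setting_dominant)
  have "norm (lam l) \<le> Re (lam 1)" if "l \<in> {1..d}" for l
  proof (cases "l = 1")
    case False
    with that have "l \<in> {2..d}"
      by auto
    then show ?thesis
      using standing_setting_dominant(4,5)[OF assms] by fastforce
  qed (use standing_setting_dominant(4)[OF assms] in simp)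
  then show "norm (lrs d c lam n) \<le> (\<Sum>l=1..d. norm (c l)) * Re (lam 1) ^ n" for n
    by (rule norm_lrs_le)
  show "\<exists>\<delta>>0. \<forall>n\<ge>1. zero_or_norm_ge (\<delta> * Re (lam 1) ^ n) (int_comb (lrs d c lam) e ((+) n) {..D})"
    for e D
    using assms by (rule standing_setting_shift_comb_separated)
qed

theorem lemma6p5:
  fixes d :: nat and c lam :: "nat \<Rightarrow> complex"
  assumes "standing_setting d c lam"
  shows "\<exists>L :: nat \<Rightarrow> nat. mono L \<and>
    (\<forall>m. \<forall>(\<epsilon> :: nat \<Rightarrow> int) (i :: nat \<Rightarrow> nat) j.
       (\<forall>k\<in>{1..m}. \<epsilon> k = 1 \<or> \<epsilon> k = -1) \<longrightarrow>
       1 \<le> i 1 \<longrightarrow>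
       (\<forall>k\<in>{2..m}. i (k - 1) \<le> i k) \<longrightarrow>
       j \<in> {2..m} \<longrightarrow> i j - i (j - 1) > L m \<longrightarrow>
       (\<Sum>k=1..m. of_int (\<epsilon> k) * lrs d c lam (i k)) = 0 \<longrightarrow>
       (\<Sum>k=1..j-1. of_int (\<epsilon> k) * lrs d c lam (i k)) = 0 \<and>
       (\<Sum>k=j..m. of_int (\<epsilon> k) * lrs d c lam (i k)) = 0)"
proof -
  interpret separated_growth "lrs d c lam" "Re (lam 1)" "\<Sum>l=1..d. norm (c l)"
    using assms by (rule standing_setting_separated_growth)
  show ?thesis
    using exists_mono_vanishing_sums_split unfolding vanishing_sums_split_def .
qed

end
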